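(* Let $d\in\{2,3\}$ and let $k^1,\dots,k^{d+1}\in\mathbb{Z}^d_0$ be given by $k^1=(0,1)$, $k^2=(1,0)$, $k^3=(1,1)$ when $d=2$, and $k^1=(0,0,1)$, $k^2=(0,1,0)$, $k^3=(1,0,0)$, $k^4=(1,1,1)$ when $d=3$. Let $K=\{k^1,\dots,k^{d+1}\}\cup\{-k^1,\dots,-k^{d+1}\}$. For $k\in\mathbb{Z}^d_0$ and $i\in\{1,\dots,d-1\}$ define the vector field on $\mathbb{T}^d\times SL_d(\mathbb{R})$ \[ Z_{k,i}(x,A)=\begin{pmatrix}e_k(x)\gamma_k^i\\ e_{-k}(x)(\gamma_k^i\otimes k)A\end{pmatrix}\in T_x\mathbb{T}^d\times T_ASL_d(\mathbb{R}). \] Then at each $(x,A)\in\mathbb{T}^d\times SL_d(\mathbb{R})$, \[ \operatorname{Span}\{Z_{k,i}(x,A):k\in K,\ i\in\{1,\dots,d-1\}\}=T_x\mathbb{T}^d\times T_ASL_d(\mathbb{R}). \]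
   Context: $\mathbb{T}^d=[0,2\pi]^d$ periodic; $\mathbb{Z}^d_+=\{k: k_d>0\}\cup\{k: k_1>0,k_d=0\}$, $\mathbb{Z}^d_-=-\mathbb{Z}^d_+$, $\mathbb{Z}^d_0=\mathbb{Z}^d\setminus\{0\}$; $e_k(x)=\sin(k\cdot x)$ for $k\in\mathbb{Z}^d_+$ and $\cos(k\cdot x)$ for $k\in\mathbb{Z}^d_-$. For each $k\in\mathbb{Z}^d_0$, $\gamma_k$ is a $d\times(d-1)$ matrix with columns $\gamma_k^1,\dots,\gamma_k^{d-1}$, $\gamma_k^\top k=0$, $\gamma_k^\top\gamma_k=\mathrm{Id}$, $\gamma_{-k}=-\gamma_k$. $\gamma\otimes k$ denotes the matrix $\gamma k^\top$. (These $Z_{k,i}$ are the Lie brackets $[e_k\gamma_k^i,G]$ with the drift $G$ of $\dot x=u(x)$, $\dot A=\nabla u(x)A$.) *)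

theory Defs
  imports "HOL-Analysis.Analysis"
begin

text \<open>Lattice points k in Z^d are int^'n; the coordinate order is the linorder on 'n
  (first coordinate = least index, last coordinate d = greatest index).\<close>

definition posZ :: "int^'n::{finite,linorder} \<Rightarrow> bool" where
  "posZ k \<longleftrightarrow> k \<noteq> 0 \<and> k $ (Max {i. k $ i \<noteq> 0}) > 0"

definition kdot :: "int^'n::finite \<Rightarrow> real^'n \<Rightarrow> real" where
  "kdot k x = (\<Sum>i\<in>UNIV. of_int (k $ i) * x $ i)"

definition ek :: "int^('n::{finite,linorder}) \<Rightarrow> real^('n::{finite,linorder}) \<Rightarrow> real" where
  "ek k x = (if posZ k then sin (kdot k x) else cos (kdot k x))"

definition realvec :: "int^'n::finite \<Rightarrow> real^'n" where
  "realvec k = (\<chi> i. of_int (k $ i))"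

definition outer :: "real^'n::finite \<Rightarrow> real^'n \<Rightarrow> real^'n^'n" where
  "outer g v = (\<chi> a b. g $ a * v $ b)"

definition admissible_gamma :: "(int^'n::finite \<Rightarrow> 'm::finite \<Rightarrow> real^'n) \<Rightarrow> bool" where
  "admissible_gamma \<gamma> \<longleftrightarrow>
     (\<forall>k. k \<noteq> 0 \<longrightarrow>
        (\<forall>i. \<gamma> k i \<bullet> realvec k = 0) \<and>
        (\<forall>i j. \<gamma> k i \<bullet> \<gamma> k j = (if i = j then 1 else 0)) \<and>
        (\<forall>i. \<gamma> (-k) i = - \<gamma> k i))"

definition Zfield ::
  "(int^('n::{finite,linorder}) \<Rightarrow> ('m::finite) \<Rightarrow> real^('n::{finite,linorder})) \<Rightarrow> int^('n::{finite,linorder}) \<Rightarrow> 'm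
     \<Rightarrow> real^('n::{finite,linorder}) \<Rightarrow> real^('n::{finite,linorder})^('n::{finite,linorder}) \<Rightarrow> (real^('n::{finite,linorder})) \<times> (real^('n::{finite,linorder})^('n::{finite,linorder}))" where
  "Zfield \<gamma> k i x A =
     (ek k x *\<^sub>R \<gamma> k i, ek (-k) x *\<^sub>R (outer (\<gamma> k i) (realvec k) ** A))"

text \<open>Tangent space of SL_d(R) at A: kernel of the differential of det, i.e.
  {B. tr(A^{-1} B) = 0}.\<close>
definition tangent_SL :: "real^'n::finite^'n \<Rightarrow> (real^'n^'n) set" where
  "tangent_SL A = {B. trace (matrix_inv A ** B) = 0}"

definition Kset :: "(int^'n::finite) set" where
  "Kset = (let K0 = range (\<lambda>i. axis i 1) \<union> {\<chi> i. 1} in K0 \<union> uminus ` K0)"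

end

theory Submission
  imports Defs
begin

text \<open>
  Since \<open>\<gamma>\<^sub>-\<^sub>k = -\<gamma>\<^sub>k\<close> and \<open>(-\<gamma>) \<otimes> (-k) = \<gamma> \<otimes> k\<close>, the field \<open>Z\<^sub>-\<^sub>k\<^sub>,\<^sub>i\<close> is
  \<open>(-e\<^sub>-\<^sub>k \<gamma>\<^sub>k\<^sup>i, e\<^sub>k (\<gamma>\<^sub>k\<^sup>i \<otimes> k) A)\<close>; as \<open>e\<^sub>k\<^sup>2 + e\<^sub>-\<^sub>k\<^sup>2 = 1\<close>, a rotation of the pair
  \<open>Z\<^sub>k\<^sub>,\<^sub>i, Z\<^sub>-\<^sub>k\<^sub>,\<^sub>i\<close> separates the two components. Since the \<open>\<gamma>\<^sub>k\<^sup>i\<close> span \<open>k\<^sup>\<bottom>\<close>,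
  the span therefore contains \<open>(w, 0)\<close> and \<open>(0, (w \<otimes> k) A)\<close> for every \<open>k \<in> K\<close> and
  \<open>w \<perp> k\<close>. For \<open>d \<ge> 2\<close> (the only use of \<open>d \<in> {2,3}\<close>) every coordinate vector is
  orthogonal to another one, and every traceless \<open>M\<close> decomposes as
  \<open>\<Sum>\<^sub>j (M e\<^sub>j - diag M) \<otimes> e\<^sub>j + diag M \<otimes> (1,\<dots>,1)\<close> with each term of the form
  \<open>w \<otimes> k\<close>, \<open>w \<perp> k\<close>. Finally \<open>T\<^sub>ASL\<^sub>d = {M A. tr M = 0}\<close>.
\<close>

lemma posZ_uminus:
  fixes k :: "int^'n::{finite,linorder}"
  assumes "k \<noteq> 0"
  shows "posZ (- k) \<longleftrightarrow> \<not> posZ k"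
proof -
  let ?S = "{i. k $ i \<noteq> 0}"
  have "?S \<noteq> {}" using assms by (auto simp: vec_eq_iff)
  then have "k $ Max ?S \<noteq> 0" using Max_in[of ?S] by auto
  moreover have "{i. (- k) $ i \<noteq> 0} = ?S" by auto
  ultimately show ?thesis using assms unfolding posZ_def by auto
qed

lemma power2_ek_add_power2_ek_uminus:
  fixes k :: "int^'n::{finite,linorder}"
  assumes "k \<noteq> 0"
  shows "(ek k x)\<^sup>2 + (ek (- k) x)\<^sup>2 = 1"
proof -
  have "kdot (- k) x = - kdot k x" unfolding kdot_def by (simp add: sum_negf)
  then show ?thesis using posZ_uminus[OF assms] unfolding ek_def by auto
qed

lemma realvec_uminus: "realvec (- k) = - realvec k"
  by (simp add: realvec_def vec_eq_iff)

lemma realvec_axis: "realvec (axis j (1::int)) = axis j 1"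
  by (simp add: realvec_def axis_def vec_eq_iff)

lemma realvec_one: "realvec (\<chi> i. (1::int)) = (\<chi> i. 1)"
  by (simp add: realvec_def vec_eq_iff)

lemma outer_uminus_uminus: "outer (- g) (- v) = outer g v"
  by (simp add: outer_def vec_eq_iff)

lemma trace_outer: "trace (outer g v) = g \<bullet> v"
  by (simp add: outer_def trace_def inner_vec_def)

lemma linear_outer_left: "linear (\<lambda>w. outer w v)"
  by (rule linearI) (simp_all add: outer_def vec_eq_iff algebra_simps)

lemma linear_matrix_mult_left: "linear (\<lambda>B. (C::real^'n::finite^'m) ** B)"
  by (rule linearI) (simp_all add: matrix_add_ldistrib matrix_scalar_ac scalar_matrix_assoc[symmetric])

lemma linear_matrix_mult_right: "linear (\<lambda>M. M ** (A::real^'n::finite^'m))"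
  by (rule linearI)
    (simp_all add: matrix_matrix_mult_def vec_eq_iff sum.distrib sum_distrib_left algebra_simps)

lemma linear_trace: "linear (trace :: real^'n::finite^'n \<Rightarrow> real)"
  by (rule linearI) (simp_all add: trace_def sum.distrib sum_distrib_left)

lemma linear_Pair: "linear f \<Longrightarrow> linear g \<Longrightarrow> linear (\<lambda>x. (f x, g x))"
  by (rule linearI) (simp_all add: linear_add linear_scale)

lemma linear_outer_mult: "linear (\<lambda>w. outer w v ** A)"
  using linear_compose[OF linear_outer_left linear_matrix_mult_right] by (simp add: o_def)

lemma linear_image_span_subset_span:
  assumes "linear f" and "f ` B \<subseteq> span T"
  shows "f ` span B \<subseteq> span T"
  using span_mono[OF assms(2)] by (simp add: linear_span_image[OF assms(1), symmetric] span_span)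

lemma matrix_mul_matrix_inv:
  fixes A :: "real^'n::finite^'n"
  assumes "invertible A"
  shows "A ** matrix_inv A = mat 1" and "matrix_inv A ** A = mat 1"
proof -
  have "A ** matrix_inv A = mat 1 \<and> matrix_inv A ** A = mat 1"
    using assms unfolding matrix_inv_def invertible_def by (rule someI_ex)
  then show "A ** matrix_inv A = mat 1" and "matrix_inv A ** A = mat 1" by auto
qed

lemma subspace_tangent_SL: "subspace (tangent_SL A)"
  unfolding tangent_SL_def
  using linear_subspace_kernel[OF linear_compose[OF linear_matrix_mult_left linear_trace]]
  by (simp add: o_def)

lemma tangent_SL_eq_traceless_mult:
  fixes A :: "real^'n::finite^'n"
  assumes "invertible A"
  shows "tangent_SL A = (\<lambda>M. M ** A) ` {M. trace M = 0}"
proof (intro set_eqI iffI)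
  fix B assume "B \<in> tangent_SL A"
  then have "trace (B ** matrix_inv A) = 0"
    using trace_mul_sym[of "matrix_inv A" B] by (simp add: tangent_SL_def)
  moreover have "B = (B ** matrix_inv A) ** A"
    by (simp add: matrix_mul_assoc[symmetric] matrix_mul_matrix_inv[OF assms])
  ultimately show "B \<in> (\<lambda>M. M ** A) ` {M. trace M = 0}" by blast
next
  fix B assume "B \<in> (\<lambda>M. M ** A) ` {M. trace M = 0}"
  then obtain M where "trace M = 0" and B: "B = M ** A" by blast
  have "trace (matrix_inv A ** (M ** A)) = trace ((M ** A) ** matrix_inv A)"
    by (rule trace_mul_sym)
  also have "\<dots> = trace M"
    by (simp add: matrix_mul_assoc[symmetric] matrix_mul_matrix_inv[OF assms])
  finally show "B \<in> tangent_SL A"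
    using \<open>trace M = 0\<close> by (simp add: tangent_SL_def B)
qed

lemma span_admissible_gamma:
  fixes \<gamma> :: "int^('n::finite) \<Rightarrow> ('m::finite) \<Rightarrow> real^('n::finite)"
  assumes "CARD('m) = CARD('n) - 1" and "admissible_gamma \<gamma>" and "k \<noteq> 0"
  shows "span (range (\<gamma> k)) = {w. w \<bullet> realvec k = 0}"
proof -
  have orth: "\<And>i j. \<gamma> k i \<bullet> \<gamma> k j = (if i = j then 1 else 0)"
    and perp: "\<And>i. \<gamma> k i \<bullet> realvec k = 0"
    using assms(2,3) unfolding admissible_gamma_def by auto
  have "realvec k \<noteq> 0" using assms(3) by (auto simp: realvec_def vec_eq_iff)
  have hyperplane: "{w. w \<bullet> realvec k = 0} = {w. realvec k \<bullet> w = 0}"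
    by (auto simp: inner_commute)
  have "inj (\<gamma> k)"
    by (rule injI) (metis orth zero_neq_one)
  have indep: "independent (range (\<gamma> k))"
  proof (rule pairwise_orthogonal_independent)
    show "pairwise orthogonal (range (\<gamma> k))"
      unfolding pairwise_def orthogonal_def using orth by auto
    show "0 \<notin> range (\<gamma> k)" using orth by (metis imageE inner_zero_left zero_neq_one)
  qed
  have "{w. realvec k \<bullet> w = 0} \<subseteq> span (range (\<gamma> k))"
  proof (rule card_ge_dim_independent[OF _ indep])
    show "range (\<gamma> k) \<subseteq> {w. realvec k \<bullet> w = 0}" using perp by (auto simp: inner_commute)
    show "dim {w. realvec k \<bullet> w = 0} \<le> card (range (\<gamma> k))"
      using dim_hyperplane[OF \<open>realvec k \<noteq> 0\<close>] assms(1) card_image[OF \<open>inj (\<gamma> k)\<close>] by simp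
  qed
  moreover have "span (range (\<gamma> k)) \<subseteq> {w. realvec k \<bullet> w = 0}"
    using perp by (intro span_minimal) (auto simp: subspace_hyperplane2 inner_commute)
  ultimately show ?thesis unfolding hyperplane by blast
qed

lemma rotated_pair_in_span:
  fixes u :: "'a::real_vector" and v :: "'b::real_vector"
  assumes "a\<^sup>2 + b\<^sup>2 = 1"
    and "(a *\<^sub>R u, b *\<^sub>R v) \<in> span S" and "(- (b *\<^sub>R u), a *\<^sub>R v) \<in> span S"
  shows "(u, 0) \<in> span S" and "(0, v) \<in> span S"
proof -
  have rotation: "a *\<^sub>R a *\<^sub>R w + b *\<^sub>R b *\<^sub>R w = w" for w :: "'c::real_vector"
    using assms(1) by (simp add: power2_eq_square flip: scaleR_add_left)
  have "a *\<^sub>R (a *\<^sub>R u, b *\<^sub>R v) - b *\<^sub>R (- (b *\<^sub>R u), a *\<^sub>R v) = (u, 0)"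
    using rotation by (simp add: prod_eq_iff mult.commute add.commute)
  then show "(u, 0) \<in> span S"
    using assms(2,3) by (metis span_diff span_scale)
  have "b *\<^sub>R (a *\<^sub>R u, b *\<^sub>R v) + a *\<^sub>R (- (b *\<^sub>R u), a *\<^sub>R v) = (0, v)"
    using rotation by (simp add: prod_eq_iff mult.commute add.commute)
  then show "(0, v) \<in> span S"
    using assms(2,3) by (metis span_add span_scale)
qed

lemma Zfield_uminus:
  fixes \<gamma> :: "int^('n::{finite,linorder}) \<Rightarrow> ('m::finite) \<Rightarrow> real^('n::{finite,linorder})"
  assumes "admissible_gamma \<gamma>" and "k \<noteq> 0"
  shows "Zfield \<gamma> (- k) i x A =
    (- (ek (- k) x *\<^sub>R \<gamma> k i), ek k x *\<^sub>R (outer (\<gamma> k i) (realvec k) ** A))"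
  using assms outer_uminus_uminus[of "\<gamma> k i" "realvec k"]
  by (simp add: Zfield_def admissible_gamma_def realvec_uminus)

lemma perp_in_span_Zfield:
  fixes \<gamma> :: "int^('n::{finite,linorder}) \<Rightarrow> ('m::finite) \<Rightarrow> real^('n::{finite,linorder})"
    and x :: "real^('n::{finite,linorder})"
    and A :: "real^('n::{finite,linorder})^('n::{finite,linorder})"
  assumes "CARD('m) = CARD('n) - 1" and "admissible_gamma \<gamma>" and "k \<noteq> 0"
    and "w \<bullet> realvec k = 0"
  defines "T \<equiv> (\<lambda>(k', i). Zfield \<gamma> k' i x A) ` ({k, - k} \<times> UNIV)"
  shows "(w, 0) \<in> span T" and "(0, outer w (realvec k) ** A) \<in> span T"
proof -
  have "(\<gamma> k i, 0) \<in> span T \<and> (0, outer (\<gamma> k i) (realvec k) ** A) \<in> span T" for i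
  proof -
    let ?N = "outer (\<gamma> k i) (realvec k) ** A"
    have "(ek k x *\<^sub>R \<gamma> k i, ek (- k) x *\<^sub>R ?N) \<in> span T"
      unfolding T_def by (intro span_base image_eqI[where x="(k, i)"]) (auto simp: Zfield_def)
    moreover have "(- (ek (- k) x *\<^sub>R \<gamma> k i), ek k x *\<^sub>R ?N) \<in> span T"
      unfolding T_def Zfield_uminus[OF assms(2,3), symmetric]
      by (intro span_base image_eqI[where x="(- k, i)"]) auto
    ultimately show ?thesis
      using rotated_pair_in_span[OF power2_ek_add_power2_ek_uminus[OF assms(3)]] by blast
  qed
  then have gen1: "(\<lambda>w. (w, 0)) ` range (\<gamma> k) \<subseteq> span T"
    and gen2: "(\<lambda>w. (0, outer w (realvec k) ** A)) ` range (\<gamma> k) \<subseteq> span T"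
    by auto
  have lin1: "linear (\<lambda>w. (w, 0 :: real^('n::{finite,linorder})^('n::{finite,linorder})))"
    and lin2: "linear (\<lambda>w. (0 :: real^('n::{finite,linorder}), outer w (realvec k) ** A))"
    by (simp_all add: linear_Pair linear_ident linear_zero linear_outer_mult)
  have "w \<in> span (range (\<gamma> k))"
    using assms(4) by (simp add: span_admissible_gamma[OF assms(1-3)])
  then show "(w, 0) \<in> span T" and "(0, outer w (realvec k) ** A) \<in> span T"
    using linear_image_span_subset_span[OF lin1 gen1] linear_image_span_subset_span[OF lin2 gen2]
    by auto
qed

lemma uminus_mem_Kset: "k \<in> Kset \<Longrightarrow> - k \<in> Kset"
  unfolding Kset_def Let_def by auto

lemma zero_notin_Kset: "0 \<notin> Kset"
  unfolding Kset_def Let_def by (auto simp: vec_eq_iff axis_def split: if_splits)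

lemma axis_mem_Kset: "axis j 1 \<in> Kset"
  unfolding Kset_def Let_def by auto

lemma one_mem_Kset: "(\<chi> i. 1) \<in> Kset"
  unfolding Kset_def Let_def by auto

lemma span_perp_Kset:
  assumes "CARD('n::finite) \<ge> 2"
  shows "span {w :: real^'n. \<exists>k\<in>Kset. w \<bullet> realvec k = 0} = UNIV"
proof -
  have "axis j 1 \<in> {w :: real^'n. \<exists>k\<in>Kset. w \<bullet> realvec k = 0}" for j :: 'n
  proof -
    have "UNIV \<noteq> {j}"
    proof
      assume "UNIV = {j}"
      then have "CARD('n) = card {j}" by (rule arg_cong)
      with assms show False by simp
    qed
    then obtain j' :: 'n where "j' \<noteq> j" by blast
    then have "axis j 1 \<bullet> realvec (axis j' (1::int)) = 0"
      by (simp add: realvec_axis inner_axis_axis)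
    then show ?thesis using axis_mem_Kset by blast
  qed
  then have "Basis \<subseteq> {w :: real^'n. \<exists>k\<in>Kset. w \<bullet> realvec k = 0}"
    by (auto simp: Basis_vec_def)
  then have "span Basis \<subseteq> span {w :: real^'n. \<exists>k\<in>Kset. w \<bullet> realvec k = 0}"
    by (rule span_mono)
  then show ?thesis by auto
qed

lemma matrix_eq_sum_outer:
  fixes M :: "real^'n::finite^'n"
  shows "M = (\<Sum>j\<in>UNIV. outer (column j M - (\<chi> a. M $ a $ a)) (axis j 1))
           + outer (\<chi> a. M $ a $ a) (\<chi> i. 1)"
  by (simp add: vec_eq_iff outer_def axis_def column_def algebra_simps sum.distrib sum_subtractf
      if_distrib cong: if_cong)

lemma traceless_in_span_outer_Kset:
  fixes M :: "real^'n::finite^'n"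
  assumes "trace M = 0"
  shows "M \<in> span {outer w (realvec k) | w k. k \<in> Kset \<and> w \<bullet> realvec k = 0}"
    (is "_ \<in> span ?O")
proof -
  let ?d = "\<chi> a. M $ a $ a"
  have "outer (column j M - ?d) (axis j 1) \<in> ?O" for j
    using axis_mem_Kset[of j]
    by (intro CollectI exI[of _ "column j M - ?d"] exI[of _ "axis j 1"])
      (simp add: realvec_axis inner_axis column_def)
  moreover have "outer ?d (\<chi> i. 1) \<in> ?O"
    using one_mem_Kset assms
    by (intro CollectI exI[of _ ?d] exI[of _ "\<chi> i. 1"])
      (simp add: realvec_one inner_vec_def trace_def)
  ultimately have "(\<Sum>j\<in>UNIV. outer (column j M - ?d) (axis j 1)) + outer ?d (\<chi> i. 1) \<in> span ?O"
    by (intro span_add span_sum span_base)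
  then show ?thesis
    using matrix_eq_sum_outer[of M] by simp
qed

lemma Zfield_mem_tangent:
  fixes \<gamma> :: "int^('n::{finite,linorder}) \<Rightarrow> ('m::finite) \<Rightarrow> real^('n::{finite,linorder})"
  assumes "admissible_gamma \<gamma>" and "k \<noteq> 0" and "invertible A"
  shows "Zfield \<gamma> k i x A \<in> UNIV \<times> tangent_SL A"
proof -
  have "trace (ek (- k) x *\<^sub>R outer (\<gamma> k i) (realvec k)) = 0"
    using assms(1,2) by (simp add: trace_outer linear_scale[OF linear_trace] admissible_gamma_def)
  then show ?thesis
    by (auto simp: Zfield_def tangent_SL_eq_traceless_mult[OF assms(3)] scalar_matrix_assoc)
qed

lemma span_Zfield_subset_tangent_SL:
  fixes \<gamma> :: "int^('n::{finite,linorder}) \<Rightarrow> ('m::finite) \<Rightarrow> real^('n::{finite,linorder})"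
  assumes "admissible_gamma \<gamma>" and "invertible A" and "0 \<notin> K"
  shows "span ((\<lambda>(k, i). Zfield \<gamma> k i x A) ` (K \<times> UNIV)) \<subseteq> UNIV \<times> tangent_SL A"
proof (intro span_minimal subspace_Times subspace_UNIV subspace_tangent_SL)
  have "Zfield \<gamma> k i x A \<in> UNIV \<times> tangent_SL A" if "k \<in> K" for k i
    using that assms(3) by (intro Zfield_mem_tangent[OF assms(1) _ assms(2)]) blast
  then show "(\<lambda>(k, i). Zfield \<gamma> k i x A) ` (K \<times> UNIV) \<subseteq> UNIV \<times> tangent_SL A"
    unfolding image_subset_iff by (simp add: split_beta mem_Times_iff del: mem_Sigma_iff)
qed

lemma perp_in_span_Zfield_Kset:
  fixes \<gamma> :: "int^('n::{finite,linorder}) \<Rightarrow> ('m::finite) \<Rightarrow> real^('n::{finite,linorder})"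
    and x :: "real^('n::{finite,linorder})"
    and A :: "real^('n::{finite,linorder})^('n::{finite,linorder})"
  assumes "CARD('m) = CARD('n) - 1" and "admissible_gamma \<gamma>"
    and "k \<in> Kset" and "w \<bullet> realvec k = 0"
  defines "S \<equiv> (\<lambda>(k, i). Zfield \<gamma> k i x A) ` (Kset \<times> UNIV)"
  shows "(w, 0) \<in> span S" and "(0, outer w (realvec k) ** A) \<in> span S"
proof -
  have "k \<noteq> 0" using assms(3) zero_notin_Kset by blast
  have "span ((\<lambda>(k', i). Zfield \<gamma> k' i x A) ` ({k, - k} \<times> UNIV)) \<subseteq> span S"
    unfolding S_def using assms(3) uminus_mem_Kset by (intro span_mono image_mono) auto
  then show "(w, 0) \<in> span S" and "(0, outer w (realvec k) ** A) \<in> span S"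
    using perp_in_span_Zfield[OF assms(1,2) \<open>k \<noteq> 0\<close> assms(4)] by blast+
qed

lemma tangent_SL_subset_span_Zfield:
  fixes \<gamma> :: "int^('n::{finite,linorder}) \<Rightarrow> ('m::finite) \<Rightarrow> real^('n::{finite,linorder})"
    and x :: "real^('n::{finite,linorder})"
    and A :: "real^('n::{finite,linorder})^('n::{finite,linorder})"
  assumes "CARD('n) \<ge> 2" and "CARD('m) = CARD('n) - 1" and "admissible_gamma \<gamma>"
    and "invertible A"
  shows "UNIV \<times> tangent_SL A \<subseteq> span ((\<lambda>(k, i). Zfield \<gamma> k i x A) ` (Kset \<times> UNIV))"
    (is "_ \<subseteq> span ?S")
proof clarify
  fix v B assume "B \<in> tangent_SL A"
  then obtain M where "trace M = 0" and B: "B = M ** A"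
    by (auto simp: tangent_SL_eq_traceless_mult[OF assms(4)])
  note perp = perp_in_span_Zfield_Kset[OF assms(2,3)]
  have "(\<lambda>w. (w, 0)) ` span {w. \<exists>k\<in>Kset. w \<bullet> realvec k = 0} \<subseteq> span ?S"
    using perp(1) by (intro linear_image_span_subset_span) (auto simp: linear_Pair linear_ident linear_zero)
  then have "(v, 0) \<in> span ?S"
    using assms(1) by (auto simp: span_perp_Kset)
  moreover have "(\<lambda>M. (0, M ** A)) ` span {outer w (realvec k) | w k. k \<in> Kset \<and> w \<bullet> realvec k = 0}
      \<subseteq> span ?S"
    using perp(2)
    by (intro linear_image_span_subset_span) (auto simp: linear_Pair linear_zero linear_matrix_mult_right)
  then have "(0, M ** A) \<in> span ?S"
    using traceless_in_span_outer_Kset[OF \<open>trace M = 0\<close>] by blast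
  ultimately show "(v, B) \<in> span ?S"
    using span_add B by fastforce
qed

theorem lemma5p4:
  fixes \<gamma> :: "int^('n::{finite,linorder}) \<Rightarrow> ('m::finite) \<Rightarrow> real^('n::{finite,linorder})"
    and x :: "real^('n::{finite,linorder})"
    and A :: "real^('n::{finite,linorder})^('n::{finite,linorder})"
  assumes "CARD('n) = 2 \<or> CARD('n) = 3"
    and "CARD('m) = CARD('n) - 1"
    and "admissible_gamma \<gamma>"
    and "det A = 1"
  shows "span ((\<lambda>(k, i). Zfield \<gamma> k i x A) ` (Kset \<times> UNIV)) = UNIV \<times> tangent_SL A"
proof (rule equalityI)
  have "invertible A" using assms(4) by (simp add: invertible_det_nz)
  then show "span ((\<lambda>(k, i). Zfield \<gamma> k i x A) ` (Kset \<times> UNIV)) \<subseteq> UNIV \<times> tangent_SL A"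
    using span_Zfield_subset_tangent_SL[OF assms(3)] zero_notin_Kset by blast
  have "CARD('n) \<ge> 2" using assms(1) by auto
  then show "UNIV \<times> tangent_SL A \<subseteq> span ((\<lambda>(k, i). Zfield \<gamma> k i x A) ` (Kset \<times> UNIV))"
    by (rule tangent_SL_subset_span_Zfield[OF _ assms(2,3) \<open>invertible A\<close>])
qed

end
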